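(* Let $U$ be a right strict binary search tree, let $x$ be a node that is the topmost node with its label, and suppose the right child $z$ of $x$ exists and is not the topmost node with its label. Then the label of $z$ is the least label occurring in $U$ that is strictly greater than the labels of all topmost nodes lying in the complete subtree at $x$.
   Context: A right strict binary search tree is a rooted binary tree (each node has a possibly empty left subtree and a possibly empty right subtree) whose nodes are labelled by elements of the totally ordered set $\{1<2<3<\cdots\}$ such that the label of each node is greater than or equal to the label of every node in its left subtree and strictly less than the label of every node in its right subtree. Labels may repeat. The complete subtree at a node $x$ consists of $x$ and all its descendants. All nodes with a given label $a$ are pairwise in ancestor–descendant relation, and the topmost node labelled $a$ is the node labelled $a$ that is an ancestor of all other nodes labelled $a$; a node is called topmost if it is the topmost node with its own label. *)

theory Defs
  imports "HOL-Library.Tree"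
begin

text \<open>Nodes of a binary tree are addressed by their path from the root.\<close>
datatype dir = Lft | Rgt

fun subtree_at :: "'a tree \<Rightarrow> dir list \<Rightarrow> 'a tree" where
  "subtree_at t [] = t"
| "subtree_at Leaf (d # ds) = Leaf"
| "subtree_at (Node l a r) (Lft # ds) = subtree_at l ds"
| "subtree_at (Node l a r) (Rgt # ds) = subtree_at r ds"

definition is_node :: "'a tree \<Rightarrow> dir list \<Rightarrow> bool" where
  "is_node t p \<longleftrightarrow> subtree_at t p \<noteq> Leaf"

definition label :: "'a tree \<Rightarrow> dir list \<Rightarrow> 'a" where
  "label t p = value (subtree_at t p)"

definition ancestor :: "dir list \<Rightarrow> dir list \<Rightarrow> bool" where
  "ancestor p q \<longleftrightarrow> (\<exists>s. q = p @ s)"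

fun right_strict_bst :: "nat tree \<Rightarrow> bool" where
  "right_strict_bst Leaf = True"
| "right_strict_bst (Node l a r) \<longleftrightarrow>
     right_strict_bst l \<and> right_strict_bst r \<and> 1 \<le> a \<and>
     (\<forall>b\<in>set_tree l. b \<le> a) \<and> (\<forall>b\<in>set_tree r. a < b)"

definition topmost :: "'a tree \<Rightarrow> dir list \<Rightarrow> bool" where
  "topmost t p \<longleftrightarrow> is_node t p \<and>
     (\<forall>q. is_node t q \<and> label t q = label t p \<longrightarrow> ancestor p q)"

end

theory Submission
  imports Defs
begin

text \<open>Since z = x\<cdot>Rgt is not topmost, its label already occurs at a strict ancestor q, and
  q must reach x by a left turn; so every node below x has label at most label z, with
  equality only below q, i.e. never at a topmost node below x. Conversely, the search tree
  property leaves no node outside the subtree at x with a label strictly between label x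
  and label z. A label b exceeding the labels of all topmost nodes below x (x among them)
  sits at a topmost node outside that subtree, hence b is at least label z.\<close>

lemma label_in_set_tree: "is_node t p \<Longrightarrow> label t p \<in> set_tree t"
  unfolding is_node_def label_def
proof (induction p arbitrary: t)
  case Nil then show ?case by (cases t) auto
next
  case (Cons d p) then show ?case by (cases t; cases d) auto
qed

lemma is_node_appendD: "is_node t (p @ q) \<Longrightarrow> is_node t p"
  unfolding is_node_def
proof (induction p arbitrary: t)
  case Nil then show ?case by (cases t; cases q) auto
next
  case (Cons d p) then show ?case by (cases t; cases d) auto
qed

lemma label_left_descendant_le:
  "right_strict_bst t \<Longrightarrow> is_node t (p @ Lft # s) \<Longrightarrow> label t (p @ Lft # s) \<le> label t p"
proof (induction p arbitrary: t)
  case Nil then show ?case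
    by (cases t) (auto simp: is_node_def label_def dest: label_in_set_tree[unfolded is_node_def label_def])
next
  case (Cons d p) then show ?case
    by (cases t; cases d) (auto simp: is_node_def label_def)
qed

lemma label_right_descendant_gt:
  "right_strict_bst t \<Longrightarrow> is_node t (p @ Rgt # s) \<Longrightarrow> label t p < label t (p @ Rgt # s)"
proof (induction p arbitrary: t)
  case Nil then show ?case
    by (cases t) (auto simp: is_node_def label_def dest: label_in_set_tree[unfolded is_node_def label_def])
next
  case (Cons d p) then show ?case
    by (cases t; cases d) (auto simp: is_node_def label_def)
qed

lemma path_cases:
  obtains "ancestor p q" | "ancestor q p"
  | r s1 s2 where "p = r @ Lft # s1" "q = r @ Rgt # s2"
  | r s1 s2 where "p = r @ Rgt # s1" "q = r @ Lft # s2"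
proof (induction p arbitrary: q thesis)
  case Nil then show ?case by (simp add: ancestor_def)
next
  case (Cons d p)
  show ?case
  proof (cases q)
    case Nil then show ?thesis using Cons.prems(2) by (simp add: ancestor_def)
  next
    case (Cons e q')
    show ?thesis
    proof (cases "d = e")
      case True
      show ?thesis
      proof (rule Cons.IH[of q'])
        show "ancestor p q' \<Longrightarrow> thesis" using Cons.prems(1) Cons True by (auto simp: ancestor_def)
        show "ancestor q' p \<Longrightarrow> thesis" using Cons.prems(2) Cons True by (auto simp: ancestor_def)
        show "p = r @ Lft # s1 \<Longrightarrow> q' = r @ Rgt # s2 \<Longrightarrow> thesis" for r s1 s2
          using Cons.prems(3)[of "d # r"] Cons True by simp
        show "p = r @ Rgt # s1 \<Longrightarrow> q' = r @ Lft # s2 \<Longrightarrow> thesis" for r s1 s2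
          using Cons.prems(4)[of "d # r"] Cons True by simp
      qed
    next
      case False
      then show ?thesis using Cons Cons.prems(3,4)[of "[]"] by (cases d; cases e) auto
    qed
  qed
qed

lemma same_label_ancestor:
  assumes "right_strict_bst t" "is_node t p" "is_node t q" "label t p = label t q"
  shows "ancestor p q \<or> ancestor q p"
  using assms label_left_descendant_le label_right_descendant_gt
  by (cases p q rule: path_cases) (metis leD)+

lemma set_tree_ex_node: "b \<in> set_tree t \<Longrightarrow> \<exists>p. is_node t p \<and> label t p = b"
proof (induction t)
  case Leaf then show ?case by simp
next
  case (Node l a r)
  consider "b = a" | "b \<in> set_tree l" | "b \<in> set_tree r" using Node.prems by auto
  then show ?case
  proof cases
    case 1 then show ?thesis
      by (intro exI[of _ "[]"]) (simp add: is_node_def label_def)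
  next
    case 2 then obtain p where "is_node l p" "label l p = b" using Node.IH by blast
    then show ?thesis
      by (intro exI[of _ "Lft # p"]) (simp add: is_node_def label_def)
  next
    case 3 then obtain p where "is_node r p" "label r p = b" using Node.IH by blast
    then show ?thesis
      by (intro exI[of _ "Rgt # p"]) (simp add: is_node_def label_def)
  qed
qed

text \<open>A shortest path carrying a given label is topmost, because nodes with equal labels are
  comparable.\<close>

lemma ex_topmost_label:
  assumes "right_strict_bst t" "b \<in> set_tree t"
  obtains w where "topmost t w" "label t w = b"
proof -
  let ?S = "{p. is_node t p \<and> label t p = b}"
  obtain w where w: "w \<in> ?S" "\<forall>p\<in>?S. length w \<le> length p"
    using ex_has_least_nat[of "\<lambda>p. p \<in> ?S" _ length] set_tree_ex_node[OF assms(2)] by blast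
  have "topmost t w"
    unfolding topmost_def
  proof (intro conjI allI impI)
    show "is_node t w" using w by simp
    fix q assume q: "is_node t q \<and> label t q = label t w"
    then have "ancestor w q \<or> ancestor q w" using same_label_ancestor[OF assms(1)] w by auto
    moreover have "length w \<le> length q" using w q by auto
    ultimately show "ancestor w q" by (auto simp: ancestor_def)
  qed
  then show thesis using that w by auto
qed

lemma non_topmost_right_child:
  assumes bst: "right_strict_bst t" and z: "is_node t (x @ [Rgt])"
    and not_top: "\<not> topmost t (x @ [Rgt])"
  obtains q s where "x = q @ Lft # s" "label t q = label t (x @ [Rgt])"
proof -
  let ?c = "label t (x @ [Rgt])"
  have x_less: "label t x < ?c" using label_right_descendant_gt[OF bst z] by simp
  obtain q where q: "is_node t q" "label t q = ?c" "\<not> ancestor (x @ [Rgt]) q"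
    using z not_top unfolding topmost_def by blast
  then have "ancestor q (x @ [Rgt])" using same_label_ancestor[OF bst q(1) z] by auto
  then obtain s0 where s0: "x @ [Rgt] = q @ s0" by (auto simp: ancestor_def)
  moreover have "s0 \<noteq> []" using s0 q(3) by (auto simp: ancestor_def)
  ultimately obtain s1 where s1: "x = q @ s1"
    by (metis append_butlast_last_id butlast_append butlast_snoc)
  with x_less q(2) obtain d s where ds: "x = q @ d # s" by (cases s1) auto
  have "d = Lft"
  proof (rule ccontr)
    assume "d \<noteq> Lft"
    then have "label t q < label t x"
      using label_right_descendant_gt[OF bst] is_node_appendD[OF z] ds by (cases d) auto
    then show False using x_less q(2) by simp
  qed
  then show thesis using that ds q(2) by simp
qed

lemma label_outside_subtree:
  assumes bst: "right_strict_bst t" and z: "is_node t (x @ [Rgt])"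
    and w: "is_node t w" "\<not> ancestor x w"
  shows "label t w < label t x \<or> label t (x @ [Rgt]) \<le> label t w"
proof -
  have x: "is_node t x" using is_node_appendD[OF z] .
  note left = label_left_descendant_le[OF bst] and right = label_right_descendant_gt[OF bst]
  show ?thesis
  proof (cases x w rule: path_cases)
    case 1 then show ?thesis using w(2) by simp
  next
    case 2
    then obtain u where "x = w @ u" by (auto simp: ancestor_def)
    moreover have "u \<noteq> []" using calculation w(2) by (auto simp: ancestor_def)
    ultimately obtain e s where xs: "x = w @ e # s" by (auto simp: neq_Nil_conv)
    show ?thesis
    proof (cases e)
      case Lft
      have "label t (w @ Lft # (s @ [Rgt])) \<le> label t w" using left z xs Lft by simp
      then show ?thesis using xs Lft by simp
    next
      case Rgt
      then show ?thesis using right x xs by simp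
    qed
  next
    case (3 r s1 s2)
    have "label t (r @ Lft # (s1 @ [Rgt])) \<le> label t r" using left z 3 by simp
    then show ?thesis using right[of r s2] w(1) 3 by simp
  next
    case (4 r s1 s2)
    then show ?thesis using left[of r s2] right[of r s1] w(1) x by simp
  qed
qed

lemma topmost_descendant_label_less:
  assumes bst: "right_strict_bst t" and z: "is_node t (x @ [Rgt])"
    and not_top: "\<not> topmost t (x @ [Rgt])"
    and q': "ancestor x q'" "topmost t q'"
  shows "label t q' < label t (x @ [Rgt])"
proof -
  obtain q s where xq: "x = q @ Lft # s" and c: "label t q = label t (x @ [Rgt])"
    using non_topmost_right_child[OF bst z not_top] .
  obtain u where u: "q' = x @ u" using q'(1) by (auto simp: ancestor_def)
  have "label t q' \<le> label t q"
    using label_left_descendant_le[OF bst, of q "s @ u"] q'(2) xq u by (simp add: topmost_def)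
  moreover have "label t q' \<noteq> label t q"
  proof
    assume "label t q' = label t q"
    then have "ancestor q' q" using q'(2) xq is_node_appendD[OF z] is_node_appendD[of t q]
      unfolding topmost_def by metis
    then show False using u xq by (auto simp: ancestor_def)
  qed
  ultimately show ?thesis using c by simp
qed

theorem mainTheorem20:
  fixes U :: "nat tree" and x :: "dir list"
  assumes "right_strict_bst U"
    and "topmost U x"
    and "is_node U (x @ [Rgt])"
    and "\<not> topmost U (x @ [Rgt])"
  shows "label U (x @ [Rgt]) \<in> set_tree U
       \<and> (\<forall>q. ancestor x q \<and> topmost U q \<longrightarrow> label U q < label U (x @ [Rgt]))
       \<and> (\<forall>b\<in>set_tree U. (\<forall>q. ancestor x q \<and> topmost U q \<longrightarrow> label U q < b)
              \<longrightarrow> label U (x @ [Rgt]) \<le> b)"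
proof (intro conjI allI impI ballI)
  show "label U (x @ [Rgt]) \<in> set_tree U" using label_in_set_tree[OF assms(3)] .
  show "label U q < label U (x @ [Rgt])" if "ancestor x q \<and> topmost U q" for q
    using topmost_descendant_label_less[OF assms(1,3,4)] that by blast
  fix b assume b: "b \<in> set_tree U"
    and above: "\<forall>q. ancestor x q \<and> topmost U q \<longrightarrow> label U q < b"
  obtain w where w: "topmost U w" "label U w = b" using ex_topmost_label[OF assms(1) b] .
  have "label U x < b" using above assms(2) by (auto simp: ancestor_def)
  moreover have "\<not> ancestor x w" using above w by auto
  then have "label U w < label U x \<or> label U (x @ [Rgt]) \<le> label U w"
    using label_outside_subtree[OF assms(1,3)] w(1) by (simp add: topmost_def)
  ultimately show "label U (x @ [Rgt]) \<le> b" using w(2) by auto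
qed

end
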